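(* Let $(Q,\cdot)$ be a quadratical quasigroup and $a,b\in Q$ distinct. Then for every integer $t>1$ and every $k\in\{1,2,3,4\}$, $aba\cdot tk=(t-1)k$.
   Context: A quadratical quasigroup is a quasigroup satisfying $xy\cdot x=zx\cdot yz$ (equivalently, a groupoid satisfying $x\cdot x=x$, $yx\cdot xy=x$, $xy\cdot zw=xz\cdot yw$). $aba$ denotes $ab\cdot a$. The elements $tk$ are defined by $11=a$, $12=ab$, $13=ba$, $14=b$ and, for $n\ge2$, $n1=(n-1)1\cdot(n-1)2$, $n2=(n-1)2\cdot(n-1)4$, $n3=(n-1)3\cdot(n-1)1$, $n4=(n-1)4\cdot(n-1)3$. *)

theory Defs
  imports Main
begin

definition quasigroup :: "('a \<Rightarrow> 'a \<Rightarrow> 'a) \<Rightarrow> bool" where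
  "quasigroup m \<longleftrightarrow> (\<forall>a b. \<exists>!x. m a x = b) \<and> (\<forall>a b. \<exists>!y. m y a = b)"

definition quadratical :: "('a \<Rightarrow> 'a \<Rightarrow> 'a) \<Rightarrow> bool" where
  "quadratical m \<longleftrightarrow> quasigroup m \<and>
     (\<forall>x y z. m (m x y) x = m (m z x) (m y z))"

text \<open>telem m a b t : the quadruple (t1, t2, t3, t4) for t >= 1
  (the value at t = 0 is an unused dummy, set equal to the t = 1 values).\<close>
fun telem :: "('a \<Rightarrow> 'a \<Rightarrow> 'a) \<Rightarrow> 'a \<Rightarrow> 'a \<Rightarrow> nat \<Rightarrow> 'a \<times> 'a \<times> 'a \<times> 'a" where
  "telem m a b 0 = (a, m a b, m b a, b)"
| "telem m a b (Suc 0) = (a, m a b, m b a, b)"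
| "telem m a b (Suc (Suc n)) =
     (case telem m a b (Suc n) of (x1, x2, x3, x4) \<Rightarrow>
        (m x1 x2, m x2 x4, m x3 x1, m x4 x3))"

definition tk :: "('a \<Rightarrow> 'a \<Rightarrow> 'a) \<Rightarrow> 'a \<Rightarrow> 'a \<Rightarrow> nat \<Rightarrow> nat \<Rightarrow> 'a" where
  "tk m a b t k = (case telem m a b t of (x1, x2, x3, x4) \<Rightarrow>
      (if k = 1 then x1 else if k = 2 then x2 else if k = 3 then x3 else x4))"

end

theory Submission
  imports Defs
begin

text \<open>Every quadratical quasigroup is idempotent and medial, so left multiplication by
  \<open>aba\<close> is an endomorphism. It maps the quadruple \<open>2k\<close> onto \<open>1k\<close>, and since the quadruple
  \<open>(t+1)k\<close> is built from \<open>tk\<close> by products alone, it then maps \<open>(t+1)k\<close> onto \<open>tk\<close> for every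
  \<open>t \<ge> 1\<close>.\<close>

lemma quasigroup_divisions:
  assumes "quasigroup m"
  obtains ldiv rdiv where "\<And>x y. ldiv x (m x y) = y" and "\<And>x y. m (rdiv y x) x = y"
proof
  show "(THE z. m x z = m x y) = y" for x y
    using assms unfolding quasigroup_def by (simp add: the1_equality)
  show "m (SOME z. m z x = y) x = y" for x y
    using assms unfolding quasigroup_def by (metis (mono_tags, lifting) someI_ex)
qed

lemma quadratical_idem:
  assumes "quadratical m"
  shows "m x x = x"
proof -
  obtain ldiv where ldiv: "\<And>x y. ldiv x (m x y) = y"
    using assms quasigroup_divisions unfolding quadratical_def by metis
  have "m (m x x) x = m (m x x) (m x x)"
    using assms unfolding quadratical_def by blast
  then show ?thesis
    by (metis ldiv)
qed

lemma quadratical_elastic: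
  assumes "quadratical m"
  shows "m (m y x) (m x y) = x"
proof -
  have "m (m x x) x = m (m y x) (m x y)"
    using assms unfolding quadratical_def by blast
  then show ?thesis
    using quadratical_idem[OF assms] by simp
qed

lemma quadratical_medial:
  assumes "quadratical m"
  shows "m (m x y) (m z w) = m (m x z) (m y w)"
proof -
  have law: "\<And>x y z. m (m x y) x = m (m z x) (m y z)"
    using assms unfolding quadratical_def by blast
  obtain ldiv rdiv where ldiv: "\<And>x y. ldiv x (m x y) = y" and rdiv: "\<And>x y. m (rdiv y x) x = y"
    using assms quasigroup_divisions unfolding quadratical_def by blast
  show ?thesis
    by (metis law quadratical_idem[OF assms] ldiv rdiv)
qed

lemma idem_medial_left_translation_hom:
  assumes idem: "\<And>x. m x x = x"
    and medial: "\<And>x y z w. m (m x y) (m z w) = m (m x z) (m y w)"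
  shows "m c (m x y) = m (m c x) (m c y)"
proof -
  have "m (m c x) (m c y) = m (m c c) (m x y)"
    by (rule medial)
  then show ?thesis
    by (simp add: idem)
qed

definition map4 :: "('a \<Rightarrow> 'b) \<Rightarrow> 'a \<times> 'a \<times> 'a \<times> 'a \<Rightarrow> 'b \<times> 'b \<times> 'b \<times> 'b" where
  "map4 f = map_prod f (map_prod f (map_prod f f))"

fun telem_step :: "('a \<Rightarrow> 'a \<Rightarrow> 'a) \<Rightarrow> 'a \<times> 'a \<times> 'a \<times> 'a \<Rightarrow> 'a \<times> 'a \<times> 'a \<times> 'a" where
  "telem_step m (x1, x2, x3, x4) = (m x1 x2, m x2 x4, m x3 x1, m x4 x3)"

lemma telem_Suc:
  assumes "n > 0"
  shows "telem m a b (Suc n) = telem_step m (telem m a b n)"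
proof -
  obtain n' where "n = Suc n'"
    using assms gr0_implies_Suc by blast
  then show ?thesis
    by (cases "telem m a b n") auto
qed

lemma map4_telem_step:
  assumes hom: "\<And>x y. f (m x y) = m (f x) (f y)"
  shows "map4 f (telem_step m q) = telem_step m (map4 f q)"
  by (cases q) (simp add: map4_def hom)

lemma quadratical_aba_telem_2:
  assumes "quadratical m"
  shows "map4 (m (m (m a b) a)) (telem m a b 2) = telem m a b 1"
proof -
  note idem = quadratical_idem[OF assms]
  note medial = quadratical_medial[OF assms]
  note elastic = quadratical_elastic[OF assms]
  have "m (m a b) a = m (m b a) (m b b)"
    using assms unfolding quadratical_def by blast
  then have aba_eq_bab: "m (m a b) a = m (m b a) b"
    by (simp only: idem)
  have "m (m (m a b) a) (m a (m a b)) = a"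
    by (rule elastic)
  moreover have "m (m (m a b) a) (m (m a b) b) = m a b"
    by (simp only: medial[of "m a b" a "m a b" b] idem)
  moreover have "m (m (m a b) a) (m (m b a) a) = m b a"
    by (simp only: medial[of "m a b" a "m b a" a] elastic idem)
  moreover have "m (m (m a b) a) (m b (m b a)) = b"
    by (simp only: aba_eq_bab elastic)
  ultimately show ?thesis
    by (simp add: map4_def numeral_2_eq_2)
qed

lemma quadratical_aba_telem:
  assumes "quadratical m"
  shows "map4 (m (m (m a b) a)) (telem m a b (Suc (Suc n))) = telem m a b (Suc n)"
proof (induction n)
  case 0
  show ?case
    using quadratical_aba_telem_2[OF assms] by (simp add: numeral_2_eq_2)
next
  case (Suc n)
  have hom: "m (m (m a b) a) (m x y) = m (m (m (m a b) a) x) (m (m (m a b) a) y)" for x y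
    by (rule idem_medial_left_translation_hom)
      (simp_all only: quadratical_idem[OF assms] quadratical_medial[OF assms])
  show ?case
    using Suc.IH
    by (simp only: telem_Suc[of "Suc n"] telem_Suc[of "Suc (Suc n)"] zero_less_Suc
        map4_telem_step[of "m (m (m a b) a)" m, OF hom])
qed

lemma tk_eqI_map4:
  assumes "map4 f (telem m a b t) = telem m a b s"
  shows "f (tk m a b t k) = tk m a b s k"
  using assms[symmetric] unfolding tk_def map4_def by (cases "telem m a b t") auto

theorem proposition3p6:
  fixes m :: "'a \<Rightarrow> 'a \<Rightarrow> 'a" and a b :: 'a and t k :: nat
  assumes "quadratical m" and "a \<noteq> b" and "t > 1" and "k \<in> {1, 2, 3, 4}"
  shows "m (m (m a b) a) (tk m a b t k) = tk m a b (t - 1) k"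
proof -
  obtain n where t: "t = Suc (Suc n)"
    using assms(3) by (auto dest!: less_imp_Suc_add)
  show ?thesis
    unfolding t using quadratical_aba_telem[OF assms(1)] by (simp add: tk_eqI_map4)
qed

end
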